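(* Let $p$ be a prime, $\mathbb{F}=\mathbb{F}_p$, let $m>k\ge1$ and $s\ge1$ be integers, and let $S$ be a collection (possibly with repetitions) of $k$-dimensional linear subspaces of $\mathbb{F}^m$. If $|S|\ge s^{k+1}p^{\frac{k^2+k-2}{2}}$, then $S$ contains a sunflower of size at least $s$.
   Context: A collection $V_1,\dots,V_s$ of (possibly repeated) subspaces of $\mathbb{F}^m$ is a sunflower if, with $C=\bigcap_{j}V_j$, one has $V_i\cap V_{i'}=C$ for all $i\ne i'$. *)

theory Defs
  imports "HOL-Analysis.Cartesian_Space" "HOL-Computational_Algebra.Primes"
begin

text \<open>A finite family of subspaces, indexed by J (repetitions allowed: distinct indices may
carry equal subspaces), is a sunflower if any two members (with distinct indices) intersect
exactly in the common intersection of the whole family.\<close>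
definition sunflower :: "'i set \<Rightarrow> ('i \<Rightarrow> 'v set) \<Rightarrow> bool" where
  "sunflower J V \<longleftrightarrow>
     (\<forall>i\<in>J. \<forall>i'\<in>J. i \<noteq> i' \<longrightarrow> V i \<inter> V i' = (\<Inter>j\<in>J. V j))"

end

theory Submission
  imports Defs
begin

text \<open>Induction on the codimension \<open>k\<close> of a subspace \<open>C\<close> contained in every member of
the family (initially \<open>C = {0}\<close>). An inclusion-maximal subfamily \<open>J\<close> whose members pairwise
intersect exactly in \<open>C\<close> is a sunflower; if \<open>|J| < s\<close>, maximality says that every \<open>V\<^sub>i\<close>
meets some \<open>V\<^sub>j\<close>, \<open>j \<in> J\<close>, outside \<open>C\<close>. For \<open>k = 1\<close> this forces \<open>V\<^sub>i = V\<^sub>j\<close>, so some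
subspace is repeated \<open>s\<close> times, and repeated copies form a sunflower. For \<open>k \<ge> 2\<close> the at most
\<open>(s - 1) p\<^sup>k\<close> vectors of complements of \<open>C\<close> in the \<open>V\<^sub>j\<close> hit every \<open>V\<^sub>i\<close> outside \<open>C\<close>, so by
pigeonhole a single vector \<open>d \<notin> C\<close> lies in a \<open>1/(s p\<^sup>k)\<close> fraction of the family, and the
induction hypothesis applies to the span of \<open>C\<close> and \<open>d\<close>.\<close>

lemma exists_large_fiber:
  assumes "finite I" and "I \<noteq> {}" and "finite D"
    and "\<forall>i\<in>I. \<exists>d\<in>D. P i d" and "card D * M \<le> card I"
  shows "\<exists>d\<in>D. M \<le> card {i\<in>I. P i d}"
proof -
  obtain f where f: "\<forall>i\<in>I. f i \<in> D \<and> P i (f i)"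
    using assms(4) by metis
  then have "D \<noteq> {}"
    using assms(2) by blast
  then obtain d where d: "d \<in> D" and "card I \<le> card (f -` {d} \<inter> I) * card D"
    using pigeonhole_card[of f I D] f assms(1,3) by auto
  with assms(5) have "card D * M \<le> card D * card (f -` {d} \<inter> I)"
    by (metis le_trans mult.commute)
  then have "M \<le> card (f -` {d} \<inter> I)"
    using \<open>finite D\<close> \<open>D \<noteq> {}\<close> by (simp add: card_gt_0_iff)
  also have "\<dots> \<le> card {i\<in>I. P i d}"
    using f assms(1) by (intro card_mono) auto
  finally show ?thesis
    using d by blast
qed

lemma sunflower_if_pairwise_Int_eq:
  assumes "\<And>j. j \<in> J \<Longrightarrow> C \<subseteq> V j" and "pairwise (\<lambda>i j. V i \<inter> V j = C) J"
  shows "sunflower J V"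
  using assms unfolding sunflower_def pairwise_def by blast

lemma sunflower_or_small_blocking_set:
  fixes V :: "'i \<Rightarrow> 'a set"
  assumes "finite I" and "\<And>i. i \<in> I \<Longrightarrow> C \<subset> V i"
  shows "(\<exists>J\<subseteq>I. s \<le> card J \<and> sunflower J V) \<or>
         (\<exists>J\<subseteq>I. card J < s \<and> (\<forall>i\<in>I. \<exists>j\<in>J. \<not> V i \<inter> V j \<subseteq> C))"
proof -
  define F where "F = {J. J \<subseteq> I \<and> pairwise (\<lambda>i j. V i \<inter> V j = C) J}"
  have "F \<subseteq> Pow I"
    unfolding F_def by blast
  then have "finite F"
    using assms(1) by (meson finite_Pow_iff finite_subset)
  moreover have "{} \<in> F"
    unfolding F_def by simp
  ultimately obtain J where "J \<in> F" and maximal: "\<And>J'. J' \<in> F \<Longrightarrow> J \<subseteq> J' \<Longrightarrow> J' = J"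
    using finite_has_maximal[of F] by blast
  then have "J \<subseteq> I" and pairwise_J: "pairwise (\<lambda>i j. V i \<inter> V j = C) J"
    unfolding F_def by auto
  have "sunflower J V"
    using \<open>J \<subseteq> I\<close> pairwise_J assms(2) by (intro sunflower_if_pairwise_Int_eq) auto
  moreover have "\<exists>j\<in>J. \<not> V i \<inter> V j \<subseteq> C" if "i \<in> I" for i
  proof (cases "i \<in> J")
    case True
    then show ?thesis
      using assms(2)[OF that] by blast
  next
    case False
    then have "insert i J \<notin> F"
      using maximal by blast
    then have "\<not> pairwise (\<lambda>i j. V i \<inter> V j = C) (insert i J)"
      using \<open>J \<subseteq> I\<close> that unfolding F_def by blast
    then obtain j where "j \<in> J" and "V i \<inter> V j \<noteq> C"
      using pairwise_J by (auto simp: pairwise_insert Int_commute)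
    then show ?thesis
      using assms(2) that \<open>J \<subseteq> I\<close> by blast
  qed
  ultimately show ?thesis
    using \<open>J \<subseteq> I\<close> by (meson not_le)
qed

lemma finite_UNIV_vec:
  assumes "finite (UNIV :: 'a set)"
  shows "finite (UNIV :: ('a ^ 'n) set)"
proof (rule card_ge_0_finite)
  have "0 < CARD('a)"
    using assms by (rule finite_UNIV_card_ge_0)
  then show "0 < CARD('a ^ 'n)"
    unfolding CARD_vec by (rule zero_less_power)
qed

lemma card_vec_span_le:
  fixes B :: "('a::field ^ 'n) set"
  assumes "finite (UNIV :: 'a set)" and "finite B"
  shows "card (vec.span B) \<le> CARD('a) ^ card B"
proof -
  let ?comb = "\<lambda>u. \<Sum>v\<in>B. u v *s v"
  have "?comb u \<in> ?comb ` (B \<rightarrow>\<^sub>E UNIV)" for u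
  proof
    show "?comb u = ?comb (restrict u B)"
      by (rule sum.cong) auto
  qed (auto simp: extensional_def)
  then have "vec.span B = ?comb ` (B \<rightarrow>\<^sub>E UNIV)"
    unfolding vec.span_finite[OF assms(2)] by blast
  also have "card \<dots> \<le> card (B \<rightarrow>\<^sub>E (UNIV :: 'a set))"
    using assms by (intro card_image_le finite_PiE) auto
  also have "\<dots> = CARD('a) ^ card B"
    using assms(2) by (simp add: card_PiE)
  finally show ?thesis .
qed

lemma dim_span_insert_notin:
  fixes C :: "('a::field ^ 'n) set"
  assumes "vec.subspace C" and "d \<notin> C"
  shows "vec.dim (vec.span (insert d C)) = vec.dim C + 1"
proof -
  have "d \<notin> vec.span C"
    using assms(2) vec.span_eq_iff[THEN iffD2, OF assms(1)] by blast
  then show ?thesis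
    by (simp add: vec.dim_insert)
qed

lemma codim_one_subspaces_eq:
  fixes C V W :: "('a::field ^ 'n) set"
  assumes "vec.subspace C"
    and "vec.subspace V" "C \<subseteq> V" "vec.dim V = vec.dim C + 1"
    and "vec.subspace W" "C \<subseteq> W" "vec.dim W = vec.dim C + 1"
    and "\<not> V \<inter> W \<subseteq> C"
  shows "V = W"
proof -
  obtain d where d: "d \<in> V" "d \<in> W" "d \<notin> C"
    using assms(8) by blast
  have span_eq: "vec.span (insert d C) = X"
    if "vec.subspace X" "C \<subseteq> X" "vec.dim X = vec.dim C + 1" "d \<in> X" for X
    using that dim_span_insert_notin[OF assms(1) d(3)]
    by (intro vec.subspace_dim_equal vec.span_minimal) auto
  show ?thesis
    using span_eq[OF assms(2-4) d(1)] span_eq[OF assms(5-7) d(2)] by (rule subst)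
qed

lemma exists_complement_span:
  fixes C V :: "('a::field ^ 'n) set"
  assumes "vec.subspace C" and "C \<subseteq> V"
  obtains B where "finite B" and "card B = vec.dim V - vec.dim C"
    and "\<And>w. w \<in> V \<Longrightarrow> \<exists>a\<in>C. \<exists>b\<in>vec.span B. w = a + b"
proof -
  obtain B0 where B0: "B0 \<subseteq> C" "vec.independent B0" "C \<subseteq> vec.span B0" "card B0 = vec.dim C"
    by (rule vec.basis_exists)
  obtain B where B: "B0 \<subseteq> B" "B \<subseteq> V" "vec.independent B" "V \<subseteq> vec.span B"
    using vec.maximal_independent_subset_extend[of B0 V] B0 assms(2) by blast
  have "finite B"
    using B(3) vec.finiteI_independent by blast
  moreover have "card (B - B0) = vec.dim V - vec.dim C"
    using vec.basis_card_eq_dim[OF B(2,4,3)] B0(4) B(1) \<open>finite B\<close>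
    by (simp add: card_Diff_subset finite_subset)
  moreover have "\<exists>a\<in>C. \<exists>b\<in>vec.span (B - B0). w = a + b" if "w \<in> V" for w
  proof -
    have "w \<in> vec.span (B0 \<union> (B - B0))"
      using that B(1,4) by (auto simp: Un_absorb1)
    then obtain a b where "w = a + b" "a \<in> vec.span B0" "b \<in> vec.span (B - B0)"
      unfolding vec.span_Un by blast
    moreover have "vec.span B0 \<subseteq> C"
      using vec.span_minimal[OF B0(1) assms(1)] .
    ultimately show ?thesis
      by blast
  qed
  ultimately show ?thesis
    using that[of "B - B0"] by blast
qed

lemma exists_hitting_vectors_of_superspace:
  fixes C V :: "('a::field ^ 'n) set"
  assumes "finite (UNIV :: 'a set)" and "vec.subspace C" and "C \<subseteq> V"
  obtains E where "card E \<le> CARD('a) ^ (vec.dim V - vec.dim C)" and "E \<inter> C = {}"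
    and "\<And>W. vec.subspace W \<Longrightarrow> C \<subseteq> W \<Longrightarrow> \<not> W \<inter> V \<subseteq> C \<Longrightarrow> \<exists>e\<in>E. e \<in> W"
proof -
  obtain B where "finite B" and card_B: "card B = vec.dim V - vec.dim C"
    and decomp: "\<And>w. w \<in> V \<Longrightarrow> \<exists>a\<in>C. \<exists>b\<in>vec.span B. w = a + b"
    using exists_complement_span[OF assms(2,3)] by blast
  have "card (vec.span B - C) \<le> card (vec.span B)"
    using finite_subset[OF subset_UNIV finite_UNIV_vec[OF assms(1)]] by (intro card_mono) auto
  also have "\<dots> \<le> CARD('a) ^ (vec.dim V - vec.dim C)"
    using card_vec_span_le[OF assms(1) \<open>finite B\<close>] card_B by simp
  finally have "card (vec.span B - C) \<le> CARD('a) ^ (vec.dim V - vec.dim C)" .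
  moreover have "(vec.span B - C) \<inter> C = {}"
    by blast
  moreover have "\<exists>e\<in>vec.span B - C. e \<in> W"
    if W: "vec.subspace W" "C \<subseteq> W" and meets: "\<not> W \<inter> V \<subseteq> C" for W
  proof -
    obtain w where w: "w \<in> W" "w \<in> V" "w \<notin> C"
      using meets by blast
    then obtain a b where ab: "a \<in> C" "b \<in> vec.span B" "w = a + b"
      using decomp by blast
    have "b \<in> W"
      using vec.subspace_diff[OF W(1), of w a] w(1) ab W(2) by auto
    moreover have "b \<notin> C"
      using ab w(3) vec.subspace_add[OF assms(2)] by blast
    ultimately show ?thesis
      using ab(2) by blast
  qed
  ultimately show ?thesis
    by (rule that)
qed

lemma exists_hitting_vectors:
  fixes V :: "'i \<Rightarrow> ('a::field ^ 'n) set"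
  assumes "finite (UNIV :: 'a set)" and "vec.subspace C" and "finite J"
    and V: "\<And>j. j \<in> J \<Longrightarrow> C \<subseteq> V j \<and> vec.dim (V j) = vec.dim C + k"
  obtains D where "finite D" and "card D \<le> card J * CARD('a) ^ k" and "D \<inter> C = {}"
    and "\<And>W j. vec.subspace W \<Longrightarrow> C \<subseteq> W \<Longrightarrow> j \<in> J \<Longrightarrow> \<not> W \<inter> V j \<subseteq> C \<Longrightarrow> \<exists>d\<in>D. d \<in> W"
proof -
  have "\<exists>E. card E \<le> CARD('a) ^ k \<and> E \<inter> C = {} \<and>
      (\<forall>W. vec.subspace W \<longrightarrow> C \<subseteq> W \<longrightarrow> \<not> W \<inter> V j \<subseteq> C \<longrightarrow> (\<exists>e\<in>E. e \<in> W))"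
    if j: "j \<in> J" for j
  proof -
    obtain E where "card E \<le> CARD('a) ^ (vec.dim (V j) - vec.dim C)" and "E \<inter> C = {}"
      and "\<And>W. vec.subspace W \<Longrightarrow> C \<subseteq> W \<Longrightarrow> \<not> W \<inter> V j \<subseteq> C \<Longrightarrow> \<exists>e\<in>E. e \<in> W"
      using exists_hitting_vectors_of_superspace[OF assms(1,2)] V[OF j] by blast
    then show ?thesis
      using V[OF j] by auto
  qed
  then obtain E where E: "\<And>j. j \<in> J \<Longrightarrow> card (E j) \<le> CARD('a) ^ k \<and> E j \<inter> C = {} \<and>
      (\<forall>W. vec.subspace W \<longrightarrow> C \<subseteq> W \<longrightarrow> \<not> W \<inter> V j \<subseteq> C \<longrightarrow> (\<exists>e\<in>E j. e \<in> W))"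
    by metis
  have E_card: "card (E j) \<le> CARD('a) ^ k" and E_disj: "E j \<inter> C = {}"
    and E_hits: "\<And>W. vec.subspace W \<Longrightarrow> C \<subseteq> W \<Longrightarrow> \<not> W \<inter> V j \<subseteq> C \<Longrightarrow> \<exists>e\<in>E j. e \<in> W"
    if "j \<in> J" for j
    using E[OF that] by simp_all
  define D where "D = (\<Union>j\<in>J. E j)"
  have "finite D"
    using finite_subset[OF subset_UNIV finite_UNIV_vec[OF assms(1)]] .
  moreover have "card D \<le> card J * CARD('a) ^ k"
  proof -
    have "card D \<le> (\<Sum>j\<in>J. card (E j))"
      unfolding D_def by (rule card_UN_le[OF assms(3)])
    also have "\<dots> \<le> (\<Sum>j\<in>J. CARD('a) ^ k)"
      using E_card by (rule sum_mono)
    finally show ?thesis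
      by simp
  qed
  moreover have "D \<inter> C = {}"
    using E_disj unfolding D_def by blast
  moreover have "\<exists>d\<in>D. d \<in> W"
    if "vec.subspace W" "C \<subseteq> W" "j \<in> J" "\<not> W \<inter> V j \<subseteq> C" for W j
    using E_hits[OF that(3,1,2,4)] that(3) unfolding D_def by blast
  ultimately show ?thesis
    by (rule that)
qed

lemma sunflower_codim_one:
  fixes V :: "'i \<Rightarrow> ('a::field ^ 'n) set"
  assumes "1 \<le> s" and "vec.subspace C" and "finite I"
    and V: "\<And>i. i \<in> I \<Longrightarrow> vec.subspace (V i) \<and> C \<subseteq> V i \<and> vec.dim (V i) = vec.dim C + 1"
    and "s ^ 2 \<le> card I"
  shows "\<exists>J\<subseteq>I. s \<le> card J \<and> sunflower J V"
proof -
  have "C \<subset> V i" if "i \<in> I" for i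
    using V[OF that] by auto
  from sunflower_or_small_blocking_set[OF assms(3) this]
  consider "\<exists>J\<subseteq>I. s \<le> card J \<and> sunflower J V"
    | J where "J \<subseteq> I" and "card J < s" and "\<forall>i\<in>I. \<exists>j\<in>J. \<not> V i \<inter> V j \<subseteq> C"
    by iprover
  then show ?thesis
  proof cases
    case (2 J)
    have "\<exists>j\<in>J. V i = V j" if i: "i \<in> I" for i
    proof -
      obtain j where "j \<in> J" and "\<not> V i \<inter> V j \<subseteq> C"
        using 2(3) i by blast
      moreover have "j \<in> I"
        using \<open>j \<in> J\<close> 2(1) by blast
      moreover have "V i = V j"
        using V[OF i] V[OF \<open>j \<in> I\<close>] \<open>\<not> V i \<inter> V j \<subseteq> C\<close>
        by (intro codim_one_subspaces_eq[OF assms(2)]) simp_all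
      ultimately show ?thesis
        by blast
    qed
    moreover have "card J * s \<le> card I"
    proof -
      have "card J * s \<le> s * s"
        using 2(2) by simp
      also have "\<dots> \<le> card I"
        using assms(5) by (simp add: power2_eq_square)
      finally show ?thesis .
    qed
    moreover have "I \<noteq> {}"
      using one_le_power[OF assms(1), of 2] assms(5) by auto
    ultimately obtain j where "s \<le> card {i\<in>I. V i = V j}"
      using exists_large_fiber[OF assms(3) _ finite_subset[OF 2(1) assms(3)], where P = "\<lambda>i j. V i = V j"]
      by blast
    moreover have "sunflower {i\<in>I. V i = V j} V"
      by (rule sunflower_if_pairwise_Int_eq[where C = "V j"]) (auto simp: pairwise_def)
    ultimately show ?thesis
      by (intro exI[of _ "{i\<in>I. V i = V j}"]) auto
  qed
qed

lemma sunflower_or_large_subfamily_through_vector: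
  fixes V :: "'i \<Rightarrow> ('a::field ^ 'n) set"
  assumes "finite (UNIV :: 'a set)" and "vec.subspace C" and "finite I" and "I \<noteq> {}"
    and V: "\<And>i. i \<in> I \<Longrightarrow> vec.subspace (V i) \<and> C \<subseteq> V i \<and> vec.dim (V i) = vec.dim C + k"
    and "1 \<le> k" and "s * CARD('a) ^ k * M \<le> card I"
  shows "(\<exists>J\<subseteq>I. s \<le> card J \<and> sunflower J V) \<or> (\<exists>d. d \<notin> C \<and> M \<le> card {i\<in>I. d \<in> V i})"
proof -
  have "C \<subset> V i" if "i \<in> I" for i
    using V[OF that] assms(6) by auto
  from sunflower_or_small_blocking_set[OF assms(3) this]
  consider "\<exists>J\<subseteq>I. s \<le> card J \<and> sunflower J V"
    | J where "J \<subseteq> I" and "card J < s" and "\<forall>i\<in>I. \<exists>j\<in>J. \<not> V i \<inter> V j \<subseteq> C"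
    by iprover
  then show ?thesis
  proof cases
    case 1
    then show ?thesis
      by (rule disjI1)
  next
    case (2 J)
    have "finite J"
      using finite_subset[OF 2(1) assms(3)] .
    have V_J: "\<And>j. j \<in> J \<Longrightarrow> C \<subseteq> V j \<and> vec.dim (V j) = vec.dim C + k"
      using V 2(1) by blast
    obtain D where D: "finite D" "card D \<le> card J * CARD('a) ^ k" "D \<inter> C = {}"
      and hits: "\<And>W j. vec.subspace W \<Longrightarrow> C \<subseteq> W \<Longrightarrow> j \<in> J \<Longrightarrow> \<not> W \<inter> V j \<subseteq> C \<Longrightarrow> \<exists>d\<in>D. d \<in> W"
      using exists_hitting_vectors[where V = V, OF assms(1,2) \<open>finite J\<close> V_J] by blast
    have "\<exists>d\<in>D. d \<in> V i" if i: "i \<in> I" for i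
    proof -
      obtain j where "j \<in> J" and "\<not> V i \<inter> V j \<subseteq> C"
        using 2(3) i by blast
      then show ?thesis
        using hits V[OF i] by simp
    qed
    moreover have "card D * M \<le> card I"
      using D(2) 2(2) assms(7) by (meson le_trans less_imp_le_nat mult_le_mono1)
    ultimately obtain d where "d \<in> D" "M \<le> card {i\<in>I. d \<in> V i}"
      using exists_large_fiber[OF assms(3,4) D(1), where P = "\<lambda>i d. d \<in> V i"] by blast
    then show ?thesis
      using D(3) by blast
  qed
qed

text \<open>\<open>(k\<^sup>2 + k - 2) div 2 = 2 + 3 + \<dots> + k\<close>; the truncated subtraction is harmless for \<open>k \<ge> 1\<close>.\<close>

lemma sunflower_exponent_Suc:
  assumes "1 \<le> (k::nat)"
  shows "(Suc k ^ 2 + Suc k - 2) div 2 = (k^2 + k - 2) div 2 + Suc k"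
  using assms by (cases k) (simp_all add: power2_eq_square algebra_simps)

lemma sunflower_in_family_over_subspace:
  fixes V :: "'i \<Rightarrow> ('a::field ^ 'n) set"
  assumes "finite (UNIV :: 'a set)" and "1 \<le> s" and "1 \<le> k"
    and "vec.subspace C" and "finite I"
    and "\<And>i. i \<in> I \<Longrightarrow> vec.subspace (V i) \<and> C \<subseteq> V i \<and> vec.dim (V i) = vec.dim C + k"
    and "s ^ (k + 1) * CARD('a) ^ ((k^2 + k - 2) div 2) \<le> card I"
  shows "\<exists>J\<subseteq>I. s \<le> card J \<and> sunflower J V"
  using assms(3-)
proof (induction k arbitrary: C I rule: nat_induct_at_least)
  case base
  have "s ^ 2 \<le> card I"
    using base(4) by (simp add: power2_eq_square)
  then show ?case
    using sunflower_codim_one[where V = V, OF assms(2) base(1-3)] by simp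
next
  case (Suc k)
  let ?M = "s ^ (k + 1) * CARD('a) ^ ((k^2 + k - 2) div 2)"
  have "s * CARD('a) ^ Suc k * ?M = s ^ (Suc k + 1) * CARD('a) ^ ((Suc k ^ 2 + Suc k - 2) div 2)"
    unfolding sunflower_exponent_Suc[OF Suc.hyps(1)] by (simp add: power_add ac_simps)
  also have "\<dots> \<le> card I"
    by (rule Suc.prems(4))
  finally have bound: "s * CARD('a) ^ Suc k * ?M \<le> card I" .
  moreover have "0 < s * CARD('a) ^ Suc k * ?M"
    using assms(2) finite_UNIV_card_ge_0[OF assms(1)] by simp
  ultimately have "I \<noteq> {}"
    by auto
  have "1 \<le> Suc k"
    by simp
  with sunflower_or_large_subfamily_through_vector[OF assms(1) Suc.prems(1,2) \<open>I \<noteq> {}\<close> Suc.prems(3)]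
  consider "\<exists>J\<subseteq>I. s \<le> card J \<and> sunflower J V"
    | d where "d \<notin> C" and "?M \<le> card {i\<in>I. d \<in> V i}"
    using bound by iprover
  then show ?case
  proof cases
    case (2 d)
    let ?C' = "vec.span (insert d C)"
    have fin: "finite {i\<in>I. d \<in> V i}"
      using Suc.prems(2) by simp
    have V_over_C': "vec.subspace (V i) \<and> ?C' \<subseteq> V i \<and> vec.dim (V i) = vec.dim ?C' + k"
      if "i \<in> {i\<in>I. d \<in> V i}" for i
    proof -
      have V_i: "vec.subspace (V i) \<and> C \<subseteq> V i \<and> vec.dim (V i) = vec.dim C + Suc k"
        using Suc.prems(3) that by blast
      then have "?C' \<subseteq> V i"
        using that by (intro vec.span_minimal) auto
      then show ?thesis
        using V_i dim_span_insert_notin[OF Suc.prems(1) 2(1)] by simp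
    qed
    have "\<exists>J\<subseteq>{i\<in>I. d \<in> V i}. s \<le> card J \<and> sunflower J V"
      by (rule Suc.IH[OF vec.subspace_span fin V_over_C' 2(2)])
    then show ?thesis
      by blast
  qed
qed

theorem lemma3p20:
  fixes V :: "'i \<Rightarrow> ('f::field ^ 'm) set"
    and I :: "'i set" and p k s :: nat
  assumes "finite (UNIV :: 'f set)" and "CARD('f) = p" and "prime p"
    and "1 \<le> k" and "k < CARD('m)" and "1 \<le> s"
    and "finite I"
    and "\<And>i. i \<in> I \<Longrightarrow> vec.subspace (V i) \<and> vec.dim (V i) = k"
    and "card I \<ge> s ^ (k + 1) * p ^ ((k^2 + k - 2) div 2)"
  shows "\<exists>J\<subseteq>I. card J \<ge> s \<and> sunflower J V"
proof -
  have dim_zero: "vec.dim {0 :: 'f ^ 'm} = 0"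
    using vec.dim_span[of "{}"] by simp
  have "\<exists>J\<subseteq>I. s \<le> card J \<and> sunflower J V"
  proof (rule sunflower_in_family_over_subspace[OF assms(1,6,4) vec.subspace_single_0 assms(7)])
    show "vec.subspace (V i) \<and> {0} \<subseteq> V i \<and> vec.dim (V i) = vec.dim {0} + k" if "i \<in> I" for i
      using assms(8)[OF that] vec.subspace_0 dim_zero by auto
    show "s ^ (k + 1) * CARD('f) ^ ((k^2 + k - 2) div 2) \<le> card I"
      using assms(2,9) by simp
  qed
  then show ?thesis
    by simp
qed

end
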